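(* Let $n$ be a positive integer and let $\varphi,\phi\in\mathcal{H}[1,n]$ with $\varphi(z)\phi(z)\neq 0$ in $\mathbb{D}$. Let $\lambda,\eta,\gamma,\delta$ be complex numbers with $\eta\neq 0$ and $\lambda+\delta=\eta+\gamma=1$, and let $\alpha,\beta$ be non-negative real numbers with $\beta\neq 0$. Let $g\in\mathcal{A}_n$ and suppose that $$Q(z)=\lambda\frac{zg'(z)}{g(z)}+\frac{z\varphi'(z)}{\varphi(z)}+\delta\prec\frac{1+z}{1-z}.$$ If $F$ is defined by $$F(z)=\left(\frac{\alpha+\beta}{\phi^{\beta}(z)g^{\lambda\alpha}(z)\varphi^{\alpha}(z)z^{\delta\alpha+\beta\gamma}}\int_0^z g^{\lambda\alpha}(t)\varphi^{\alpha}(t)t^{\beta+\delta\alpha-1}Q(t)\,dt\right)^{\frac{1}{\eta\beta}},$$ then $F\in\mathcal{A}_n$, $F(z)/z\neq 0$ in $\mathbb{D}$, and for $z\in\mathbb{D}$, $$\operatorname{Re}\left(\frac{\eta\frac{zF'(z)}{F(z)}+\frac{z\phi'(z)}{\phi(z)}+\gamma}{\lambda\frac{zg'(z)}{g(z)}+\frac{z\varphi'(z)}{\varphi(z)}+\delta}\right)>0.$$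
   Context: $\mathbb{D}$ is the open unit disk. $\mathcal{H}[1,n]$ is the class of functions analytic in $\mathbb{D}$ of the form $1+a_nz^n+\cdots$; $\mathcal{A}_n$ is the class of functions analytic in $\mathbb{D}$ of the form $z+a_{n+1}z^{n+1}+\cdots$. $f\prec F$ means $f=F\circ\omega$ for some analytic $\omega:\mathbb{D}\to\mathbb{D}$ with $\omega(0)=0$. Complex powers are understood as the analytic branches normalized at the origin. *)

theory Defs
  imports "HOL-Complex_Analysis.Complex_Analysis"
begin

text \<open>The class H[1,n]: analytic in the unit disk, of the form 1 + a_n z^n + ...\<close>
definition H1 :: "nat \<Rightarrow> (complex \<Rightarrow> complex) \<Rightarrow> bool" where
  "H1 n f \<longleftrightarrow> f holomorphic_on ball 0 1 \<and> f 0 = 1 \<and>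
     (\<forall>k. 1 \<le> k \<and> k \<le> n - 1 \<longrightarrow> (deriv ^^ k) f 0 = 0)"

text \<open>The class A_n: analytic in the unit disk, of the form z + a_(n+1) z^(n+1) + ...\<close>
definition An :: "nat \<Rightarrow> (complex \<Rightarrow> complex) \<Rightarrow> bool" where
  "An n f \<longleftrightarrow> f holomorphic_on ball 0 1 \<and> f 0 = 0 \<and> deriv f 0 = 1 \<and>
     (\<forall>k. 2 \<le> k \<and> k \<le> n \<longrightarrow> (deriv ^^ k) f 0 = 0)"

definition subordinate :: "(complex \<Rightarrow> complex) \<Rightarrow> (complex \<Rightarrow> complex) \<Rightarrow> bool" where
  "subordinate f F \<longleftrightarrow> (\<exists>w. w holomorphic_on ball 0 1 \<and> w ` ball 0 1 \<subseteq> ball 0 1 \<and> w 0 = 0 \<and>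
     (\<forall>z\<in>ball 0 1. f z = F (w z)))"

text \<open>Analytic logarithm of f on the unit disk normalized by L(0) = 0 (meaningful for
  f analytic, zero-free on the disk, f(0) = 1), and the corresponding normalized
  analytic branch of the power f^c.\<close>
definition nlog :: "(complex \<Rightarrow> complex) \<Rightarrow> complex \<Rightarrow> complex" where
  "nlog f = (SOME L. L holomorphic_on ball 0 1 \<and> L 0 = 0 \<and> (\<forall>z\<in>ball 0 1. exp (L z) = f z))"

definition npow :: "(complex \<Rightarrow> complex) \<Rightarrow> complex \<Rightarrow> complex \<Rightarrow> complex" where
  "npow f c z = exp (c * nlog f z)"

text \<open>z f'(z)/f(z) for f in A_n, with its removable value 1 at the origin.\<close>
definition zlogdA :: "(complex \<Rightarrow> complex) \<Rightarrow> complex \<Rightarrow> complex" where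
  "zlogdA f z = (if z = 0 then 1 else z * deriv f z / f z)"

text \<open>z f'(z)/f(z) for f with f(0) \<noteq> 0 (value 0 at the origin is automatic).\<close>
definition zlogd :: "(complex \<Rightarrow> complex) \<Rightarrow> complex \<Rightarrow> complex" where
  "zlogd f z = z * deriv f z / f z"

end

theory Submission
  imports Defs
begin

text \<open>
  Put \<open>G(z) = g(z)/z\<close> and \<open>\<Phi> = G\<^bsup>lam \<alpha>\<^esup> \<phi>1\<^bsup>\<alpha>\<^esup>\<close>. The hypothesis on \<open>Q\<close> says that
  \<open>z \<Phi>' = \<alpha> (Q - 1) \<Phi>\<close>, and then the integral in \<open>K\<close> is, up to the factor \<open>\<phi>2\<^bsup>\<beta>\<^esup>\<close>, the
  holomorphic solution \<open>W\<close>, \<open>W(0) = 1\<close>, of the Euler equation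
  \<open>z W' = (\<alpha> + \<beta>) Q - (\<beta> + \<alpha> Q) W\<close>, which is obtained from a power series.
  Hence \<open>K = W / \<phi>2\<^bsup>\<beta>\<^esup>\<close> and the quotient in the theorem equals \<open>((\<alpha> + \<beta>) / W - \<alpha>) / \<beta>\<close>.

  Its real part is positive by an argument of Jack type: at a point \<open>z0\<close> of least modulus
  where \<open>(\<alpha> + \<beta>) Re W - \<alpha> |W|\<^sup>2\<close> vanishes, the radial and tangential derivatives force
  \<open>z0 W'(z0)\<close> to be a non-positive multiple of the gradient of \<open>u \<mapsto> (\<alpha> + \<beta>) Re u - \<alpha> |u|\<^sup>2\<close>
  at \<open>W(z0)\<close>, which the equation forbids as long as \<open>Re Q > 0\<close>. That \<open>F\<close> lies in
  \<open>A\<^sub>n\<close> follows by tracking, for each function involved, the order to which it agrees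
  with its value at the origin.
\<close>

section \<open>Normalized logarithms and powers\<close>

lemma nlog_spec:
  assumes "f holomorphic_on ball 0 1" "\<forall>z\<in>ball 0 1. f z \<noteq> 0" "f 0 = 1"
  shows "nlog f holomorphic_on ball 0 1 \<and> nlog f 0 = 0 \<and> (\<forall>z\<in>ball 0 1. exp (nlog f z) = f z)"
proof -
  obtain L where L: "L holomorphic_on ball 0 1" "\<And>z. z \<in> ball 0 1 \<Longrightarrow> exp (L z) = f z"
    using holomorphic_logarithm_exists[of "ball 0 1" f 0] assms by auto
  have "exp (L 0) = 1"
    using L(2)[of 0] assms(3) by simp
  then have "(\<lambda>z. L z - L 0) holomorphic_on ball 0 1 \<and> L 0 - L 0 = 0 \<and>
      (\<forall>z\<in>ball 0 1. exp (L z - L 0) = f z)"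
    using L by (auto intro!: holomorphic_intros simp: exp_diff)
  then have "\<exists>L. L holomorphic_on ball 0 1 \<and> L 0 = 0 \<and> (\<forall>z\<in>ball 0 1. exp (L z) = f z)"
    by blast
  then show ?thesis
    unfolding nlog_def by (rule someI_ex)
qed

lemma npow_nonzero [simp]: "npow f c z \<noteq> 0"
  by (simp add: npow_def)

lemma npow_zero_exponent [simp]: "npow f 0 = (\<lambda>z. 1)"
  by (simp add: npow_def fun_eq_iff)

lemma npow_holomorphic:
  assumes "f holomorphic_on ball 0 1" "\<forall>z\<in>ball 0 1. f z \<noteq> 0" "f 0 = 1"
  shows "npow f c holomorphic_on ball 0 1"
  using nlog_spec[OF assms] unfolding npow_def by (auto intro!: holomorphic_intros)

lemma npow_at_0:
  assumes "f holomorphic_on ball 0 1" "\<forall>z\<in>ball 0 1. f z \<noteq> 0" "f 0 = 1"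
  shows "npow f c 0 = 1"
  using nlog_spec[OF assms] by (simp add: npow_def)

lemma deriv_nlog:
  assumes "f holomorphic_on ball 0 1" "\<forall>z\<in>ball 0 1. f z \<noteq> 0" "f 0 = 1" and z: "z \<in> ball 0 1"
  shows "deriv (nlog f) z = deriv f z / f z"
proof -
  note L = nlog_spec[OF assms(1-3)]
  have "(nlog f has_field_derivative deriv (nlog f) z) (at z)"
    using L z by (meson holomorphic_derivI open_ball)
  then have "((\<lambda>w. exp (nlog f w)) has_field_derivative f z * deriv (nlog f) z) (at z)"
    using L z by (auto intro!: derivative_eq_intros)
  then have "(f has_field_derivative f z * deriv (nlog f) z) (at z)"
    by (rule has_field_derivative_transform_within_open[where S = "ball 0 1"]) (use L z in auto)
  then show ?thesis
    using assms(2) z by (auto dest!: DERIV_imp_deriv)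
qed

lemma deriv_npow:
  assumes "f holomorphic_on ball 0 1" "\<forall>z\<in>ball 0 1. f z \<noteq> 0" "f 0 = 1" and z: "z \<in> ball 0 1"
  shows "deriv (npow f c) z = c * (deriv f z / f z) * npow f c z"
proof -
  have "(nlog f has_field_derivative deriv (nlog f) z) (at z)"
    using nlog_spec[OF assms(1-3)] z by (meson holomorphic_derivI open_ball)
  then have "(npow f c has_field_derivative c * deriv (nlog f) z * npow f c z) (at z)"
    unfolding npow_def by (auto intro!: derivative_eq_intros)
  then show ?thesis
    by (simp add: DERIV_imp_deriv deriv_nlog[OF assms])
qed

section \<open>Order of vanishing at the origin\<close>

definition vanishes_to_order :: "nat \<Rightarrow> (complex \<Rightarrow> complex) \<Rightarrow> bool" where
  "vanishes_to_order n f \<longleftrightarrow> (\<forall>j<n. (deriv ^^ j) f 0 = 0)"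

lemma vanishes_to_order_add:
  assumes "f analytic_on {0}" "g analytic_on {0}" "vanishes_to_order n f" "vanishes_to_order n g"
  shows "vanishes_to_order n (\<lambda>z. f z + g z)"
  using assms by (simp add: vanishes_to_order_def higher_deriv_add_at)

lemma vanishes_to_order_diff:
  assumes "f analytic_on {0}" "g analytic_on {0}" "vanishes_to_order n f" "vanishes_to_order n g"
  shows "vanishes_to_order n (\<lambda>z. f z - g z)"
  using assms by (simp add: vanishes_to_order_def higher_deriv_diff_at)

lemma vanishes_to_order_mult:
  assumes "f analytic_on {0}" "g analytic_on {0}" "vanishes_to_order n f"
  shows "vanishes_to_order n (\<lambda>z. f z * g z)"
  unfolding vanishes_to_order_def
proof (intro allI impI)
  fix j assume "j < n"
  then show "(deriv ^^ j) (\<lambda>z. f z * g z) 0 = 0"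
    using assms by (simp add: higher_deriv_mult_at vanishes_to_order_def)
qed

lemma vanishes_to_order_cong:
  assumes "eventually (\<lambda>z. f z = g z) (nhds 0)"
  shows "vanishes_to_order n f \<longleftrightarrow> vanishes_to_order n g"
  using higher_deriv_cong_ev[OF assms refl] by (simp add: vanishes_to_order_def)

lemma higher_deriv_times_z:
  assumes "f analytic_on {0}"
  shows "(deriv ^^ j) (\<lambda>z. z * f z) 0 = of_nat j * (deriv ^^ (j - 1)) f 0"
proof -
  have "(deriv ^^ j) (\<lambda>z. z * f z) 0 =
      (\<Sum>i = 0..j. of_nat (j choose i) * (deriv ^^ i) (\<lambda>z. z) 0 * (deriv ^^ (j - i)) f 0)"
    using assms by (simp add: higher_deriv_mult_at)
  also have "\<dots> = (\<Sum>i = 0..j. if i = 1 then of_nat j * (deriv ^^ (j - 1)) f 0 else 0)"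
    by (rule sum.cong) auto
  also have "\<dots> = of_nat j * (deriv ^^ (j - 1)) f 0"
    by (cases j) auto
  finally show ?thesis .
qed

lemma higher_deriv_times_z_deriv:
  assumes "f analytic_on {0}"
  shows "(deriv ^^ j) (\<lambda>z. z * deriv f z) 0 = of_nat j * (deriv ^^ j) f 0"
proof (cases j)
  case (Suc i)
  have "(deriv ^^ i) (deriv f) = (deriv ^^ j) f"
    using Suc by (simp only: funpow_Suc_right o_def)
  then show ?thesis
    using higher_deriv_times_z[OF analytic_deriv[OF assms], of j] Suc by simp
qed simp

lemma vanishes_to_order_times_z_deriv_iff:
  assumes "f analytic_on {0}"
  shows "vanishes_to_order n (\<lambda>z. z * deriv f z) \<longleftrightarrow> vanishes_to_order n (\<lambda>z. f z - f 0)"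
proof -
  have "(deriv ^^ j) (\<lambda>z. f z - f 0) 0 = (if j = 0 then 0 else (deriv ^^ j) f 0)" for j
    using higher_deriv_diff_at[OF assms analytic_on_const, of j] by simp
  then show ?thesis
    by (auto simp: vanishes_to_order_def higher_deriv_times_z_deriv[OF assms])
qed

lemma vanishes_to_order_euler_ode:
  assumes "f analytic_on {0}" "c \<notin> \<int>\<^sub>\<le>\<^sub>0"
    and "vanishes_to_order n (\<lambda>z. z * deriv f z + c * f z)"
  shows "vanishes_to_order n f"
  unfolding vanishes_to_order_def
proof (intro allI impI)
  fix j assume "j < n"
  have "(of_nat j + c) * (deriv ^^ j) f 0 = (deriv ^^ j) (\<lambda>z. z * deriv f z + c * f z) 0"
    using assms(1) by (simp add: higher_deriv_add_at higher_deriv_times_z_deriv higher_deriv_cmult'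
        analytic_intros algebra_simps)
  also have "\<dots> = 0"
    using assms(3) \<open>j < n\<close> by (simp add: vanishes_to_order_def)
  finally show "(deriv ^^ j) f 0 = 0"
    using assms(2) by (auto dest: plus_of_nat_eq_0_imp simp: add.commute)
qed

lemma vanishes_to_order_z_logderiv:
  assumes "f analytic_on {0}" "f 0 \<noteq> 0" "vanishes_to_order n (\<lambda>z. f z - f 0)"
  shows "vanishes_to_order n (\<lambda>z. z * deriv f z / f z)"
proof -
  have "vanishes_to_order n (\<lambda>z. z * deriv f z * (1 / f z))"
    using assms by (intro vanishes_to_order_mult[of "\<lambda>z. z * deriv f z"] analytic_intros)
      (auto simp: vanishes_to_order_times_z_deriv_iff)
  then show ?thesis
    by simp
qed

lemma vanishes_to_order_npow:
  assumes "f holomorphic_on ball 0 1" "\<forall>z\<in>ball 0 1. f z \<noteq> 0" "f 0 = 1"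
    and "vanishes_to_order n (\<lambda>z. f z - 1)"
  shows "vanishes_to_order n (\<lambda>z. npow f c z - 1)"
proof -
  have an: "f analytic_on {0}" "npow f c analytic_on {0}"
    using assms(1) npow_holomorphic[OF assms(1-3)] by (auto intro!: holomorphic_on_imp_analytic_at)
  have "vanishes_to_order n (\<lambda>z. z * deriv f z / f z * (c * npow f c z))"
    using an assms(3,4)
    by (intro vanishes_to_order_mult[of "\<lambda>z. z * deriv f z / f z"] vanishes_to_order_z_logderiv
        analytic_intros) auto
  moreover have "eventually (\<lambda>z. z * deriv f z / f z * (c * npow f c z) = z * deriv (npow f c) z) (nhds 0)"
    using eventually_nhds_in_open[of "ball 0 1" 0]
    by (rule eventually_mono) (auto simp: deriv_npow[OF assms(1-3)])
  ultimately have "vanishes_to_order n (\<lambda>z. z * deriv (npow f c) z)"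
    by (simp add: vanishes_to_order_cong)
  then show ?thesis
    using npow_at_0[OF assms(1-3)] by (simp add: vanishes_to_order_times_z_deriv_iff an)
qed

lemma H1_vanishes_to_order: "H1 n f \<Longrightarrow> vanishes_to_order n (\<lambda>z. f z - 1)"
  unfolding H1_def vanishes_to_order_def
  by (auto simp: higher_deriv_diff[OF _ holomorphic_on_const open_ball])

lemma An_times_z_iff:
  assumes "E holomorphic_on ball 0 1"
  shows "An n (\<lambda>z. z * E z) \<longleftrightarrow> E 0 = 1 \<and> vanishes_to_order n (\<lambda>z. E z - 1)"
proof -
  have an: "E analytic_on {0}"
    using assms by (auto intro!: holomorphic_on_imp_analytic_at)
  have zE: "(deriv ^^ k) (\<lambda>z. z * E z) 0 = of_nat k * (deriv ^^ (k - 1)) E 0" for k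
    by (rule higher_deriv_times_z[OF an])
  have E1: "(deriv ^^ j) (\<lambda>z. E z - 1) 0 = (if j = 0 then E 0 - 1 else (deriv ^^ j) E 0)" for j
    using higher_deriv_diff_at[OF an analytic_on_const, of j] by simp
  have "deriv (\<lambda>z. z * E z) 0 = E 0"
    using zE[of 1] by simp
  moreover have "(\<forall>k. 2 \<le> k \<and> k \<le> n \<longrightarrow> (deriv ^^ k) (\<lambda>z. z * E z) 0 = 0) \<longleftrightarrow>
      (\<forall>j. 1 \<le> j \<and> j < n \<longrightarrow> (deriv ^^ j) E 0 = 0)"
    unfolding zE
  proof safe
    fix j assume "\<forall>k. 2 \<le> k \<and> k \<le> n \<longrightarrow> of_nat k * (deriv ^^ (k - 1)) E 0 = 0" "1 \<le> j" "j < n"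
    then show "(deriv ^^ j) E 0 = 0"
      by (auto dest!: spec[of _ "Suc j"])
  next
    fix k assume "\<forall>j. 1 \<le> j \<and> j < n \<longrightarrow> (deriv ^^ j) E 0 = 0" "2 \<le> k" "k \<le> n"
    then show "of_nat k * (deriv ^^ (k - 1)) E 0 = 0"
      by (auto dest!: spec[of _ "k - 1"])
  qed
  ultimately show ?thesis
    using assms unfolding An_def vanishes_to_order_def E1
    by (auto intro!: holomorphic_intros)
qed

section \<open>The Euler equation z A' + c A = H\<close>

lemma conv_radius_le_divide_nat_plus:
  fixes a :: "nat \<Rightarrow> complex" and c :: real
  assumes "c > 0"
  shows "conv_radius a \<le> conv_radius (\<lambda>k. a k / (of_nat k + of_real c))"
proof (rule conv_radius_geI_ex')
  fix r :: real assume r: "0 < r" "ereal r < conv_radius a"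
  have bound: "norm (a k / (of_nat k + of_real c) * of_real r ^ k) \<le> norm (a k * of_real r ^ k) / c" for k
  proof -
    have "of_nat k + complex_of_real c = of_real (real k + c)"
      by simp
    then have "norm (of_nat k + complex_of_real c) \<ge> c"
      using assms by (simp only: norm_of_real)
    then show ?thesis
      using assms by (simp add: norm_mult norm_divide divide_simps mult_left_mono)
  qed
  have "summable (\<lambda>k. norm (a k * of_real r ^ k) / c)"
    using abs_summable_in_conv_radius[of "of_real r" a] r by (intro summable_divide) simp
  then show "summable (\<lambda>k. a k / (of_nat k + of_real c) * of_real r ^ k)"
    by (rule summable_comparison_test[rotated]) (use bound in auto)
qed

lemma powser_euler_operator_sums:
  fixes b :: "nat \<Rightarrow> complex"
  assumes radius: "1 \<le> conv_radius b" and z: "norm z < 1"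
  shows "(\<lambda>k. (of_nat k + c) * b k * z ^ k) sums
           (z * deriv (\<lambda>w. \<Sum>k. b k * w ^ k) z + c * (\<Sum>k. b k * z ^ k))"
proof -
  have summable: "summable (\<lambda>k. b k * w ^ k)" if "norm w < 1" for w
    using that radius by (intro summable_in_conv_radius) (auto intro: less_le_trans[of _ 1])
  have "deriv (\<lambda>w. \<Sum>k. b k * w ^ k) z = (\<Sum>k. diffs b k * z ^ k)"
    using z radius by (intro DERIV_imp_deriv has_field_derivative_powser) (auto intro: less_le_trans[of _ 1])
  moreover have "summable (\<lambda>k. diffs b k * z ^ k)"
    using z summable by (intro termdiff_converges[of z 1]) auto
  ultimately have "(\<lambda>k. of_nat (Suc k) * b (Suc k) * z ^ Suc k) sums (z * deriv (\<lambda>w. \<Sum>k. b k * w ^ k) z)"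
    using sums_mult[OF summable_sums, of "\<lambda>k. diffs b k * z ^ k" z]
    by (simp add: diffs_def algebra_simps)
  then have "(\<lambda>k. of_nat k * b k * z ^ k) sums (z * deriv (\<lambda>w. \<Sum>k. b k * w ^ k) z)"
    using sums_Suc_iff[of "\<lambda>k. of_nat k * b k * z ^ k"] by simp
  then have "(\<lambda>k. of_nat k * b k * z ^ k + c * (b k * z ^ k)) sums
      (z * deriv (\<lambda>w. \<Sum>k. b k * w ^ k) z + c * (\<Sum>k. b k * z ^ k))"
    using z summable by (intro sums_add sums_mult summable_sums) auto
  then show ?thesis
    by (simp add: algebra_simps)
qed

lemma euler_ode_solvable:
  fixes H :: "complex \<Rightarrow> complex" and c :: real
  assumes H: "H holomorphic_on ball 0 1" and c: "c > 0"
  obtains A where "A holomorphic_on ball 0 1"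
    and "\<And>z. z \<in> ball 0 1 \<Longrightarrow> z * deriv A z + of_real c * A z = H z"
proof -
  define a where "a k = (deriv ^^ k) H 0 / fact k" for k
  define b where "b k = a k / (of_nat k + of_real c)" for k
  have a_sums: "(\<lambda>k. a k * w ^ k) sums H w" if "w \<in> ball 0 1" for w
    using holomorphic_power_series[OF H that] by (simp add: a_def)
  have "1 \<le> conv_radius a"
  proof (rule conv_radius_geI_ex')
    fix r :: real assume "0 < r" "ereal r < 1"
    then show "summable (\<lambda>k. a k * of_real r ^ k)"
      using a_sums[of "of_real r"] by (auto intro: sums_summable)
  qed
  also have "\<dots> \<le> conv_radius b"
    unfolding b_def using c by (rule conv_radius_le_divide_nat_plus)
  finally have radius: "1 \<le> conv_radius b" .
  have "(\<lambda>w. \<Sum>k. b k * w ^ k) holomorphic_on ball 0 1"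
  proof (unfold holomorphic_on_def field_differentiable_def, intro ballI exI)
    fix w :: complex assume "w \<in> ball 0 1"
    then have "ereal (norm w) < conv_radius b"
      using radius by (auto intro: less_le_trans[of _ 1])
    then show "((\<lambda>w. \<Sum>k. b k * w ^ k) has_field_derivative (\<Sum>k. diffs b k * w ^ k)) (at w within ball 0 1)"
      by (rule has_field_derivative_powser)
  qed
  moreover have "z * deriv (\<lambda>w. \<Sum>k. b k * w ^ k) z + of_real c * (\<Sum>k. b k * z ^ k) = H z"
    if z: "z \<in> ball 0 1" for z
  proof -
    have "of_nat k + complex_of_real c \<noteq> 0" for k
      using c by (metis add_nonneg_pos of_nat_0_le_iff of_real_add of_real_eq_0_iff of_real_of_nat_eq
          order_less_irrefl)
    then have "(\<lambda>k. (of_nat k + of_real c) * b k * z ^ k) = (\<lambda>k. a k * z ^ k)"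
      by (simp add: b_def)
    then show ?thesis
      using powser_euler_operator_sums[OF radius, of z "of_real c"] a_sums[OF z] z
      by (simp add: sums_unique2)
  qed
  ultimately show ?thesis
    using that by blast
qed

lemma of_real_mult_in_ball:
  fixes z :: complex
  assumes "z \<in> ball 0 1" "0 \<le> s" "s \<le> 1"
  shows "of_real s * z \<in> ball 0 1"
proof -
  have "norm (of_real s * z) \<le> norm z"
    using assms by (auto simp: norm_mult intro: mult_left_le_one_le)
  then show ?thesis
    using assms(1) by simp
qed

lemma has_vector_derivative_euler_ode_radial:
  fixes A H :: "complex \<Rightarrow> complex" and c :: real
  assumes A: "A holomorphic_on ball 0 1"
    and ode: "\<And>w. w \<in> ball 0 1 \<Longrightarrow> w * deriv A w + of_real c * A w = H w"
    and z: "z \<in> ball 0 1" and s: "0 < s" "s \<le> 1"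
  shows "((\<lambda>s. of_real (s powr c) * A (of_real s * z)) has_vector_derivative
           of_real (s powr (c - 1)) * H (of_real s * z)) (at s)"
proof -
  have sz: "of_real s * z \<in> ball 0 1"
    using of_real_mult_in_ball[OF z] s by simp
  have "(A has_field_derivative deriv A (of_real s * z)) (at (of_real s * z))"
    using A sz by (meson holomorphic_derivI open_ball)
  moreover have "((\<lambda>s. of_real s * z) has_vector_derivative z) (at s)"
    using has_vector_derivative_mult[OF has_vector_derivative_of_real[OF DERIV_ident]
        has_vector_derivative_const] by simp
  ultimately have "((\<lambda>s. A (of_real s * z)) has_vector_derivative deriv A (of_real s * z) * z) (at s)"
    using field_vector_diff_chain_at by (fastforce simp: o_def mult.commute[of z])
  moreover have "((\<lambda>s. of_real (s powr c)) has_vector_derivative of_real (c * s powr (c - 1))) (at s)"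
    using s by (intro has_vector_derivative_of_real has_real_derivative_powr) auto
  ultimately have "((\<lambda>s. of_real (s powr c) * A (of_real s * z)) has_vector_derivative
      of_real (s powr c) * (deriv A (of_real s * z) * z) + of_real (c * s powr (c - 1)) * A (of_real s * z))
      (at s)"
    by (rule has_vector_derivative_mult[rotated])
  moreover have "s powr c = s powr (c - 1) * s"
    using s by (simp add: powr_diff)
  then have "of_real (s powr c) * (deriv A (of_real s * z) * z) + of_real (c * s powr (c - 1)) * A (of_real s * z)
      = of_real (s powr (c - 1)) * H (of_real s * z)"
    unfolding ode[OF sz, symmetric] by (simp add: algebra_simps)
  ultimately show ?thesis
    by simp
qed

lemma euler_ode_contour_integral:
  fixes A H :: "complex \<Rightarrow> complex" and c :: real
  assumes A: "A holomorphic_on ball 0 1" and c: "c > 0"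
    and ode: "\<And>w. w \<in> ball 0 1 \<Longrightarrow> w * deriv A w + of_real c * A w = H w"
    and z: "z \<in> ball 0 1" "z \<noteq> 0"
  shows "((\<lambda>t. t powr (of_real c - 1) * H t) has_contour_integral (z powr of_real c * A z))
           (linepath 0 z)"
proof -
  define P where "P s = of_real (s powr c) * A (of_real s * z)" for s
  have "continuous_on {0..1} (\<lambda>s. A (of_real s * z))"
    using z by (intro continuous_on_compose2[OF holomorphic_on_imp_continuous_on[OF A]])
      (auto intro!: continuous_intros of_real_mult_in_ball)
  moreover have "continuous_on {0..1} (\<lambda>s. s powr c)"
    using c by (intro continuous_on_powr') (auto intro!: continuous_intros)
  ultimately have "continuous_on {0..1} P"
    unfolding P_def by (intro continuous_on_mult continuous_on_of_real)
  then have "((\<lambda>s. of_real (s powr (c - 1)) * H (of_real s * z)) has_integral (P 1 - P 0)) {0..1}"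
    using has_vector_derivative_euler_ode_radial[OF A ode z(1)]
    by (intro fundamental_theorem_of_calculus_interior) (auto simp: P_def)
  then have integral: "((\<lambda>s. z powr of_real c * (of_real (s powr (c - 1)) * H (of_real s * z)))
      has_integral (z powr of_real c * A z)) {0..1}"
    using c by (auto simp: P_def dest: has_integral_mult_right)
  have integrand: "(\<lambda>t. t powr (of_real c - 1) * H t) (linepath 0 z s) * (z - 0) =
      z powr of_real c * (of_real (s powr (c - 1)) * H (of_real s * z))" if "s \<in> {0<..<1}" for s
  proof -
    have "(of_real s * z) powr (of_real c - 1) = of_real (s powr (c - 1)) * z powr (of_real c - 1)"
      using that by (subst powr_times_real_left) (auto simp flip: powr_of_real)
    moreover have "z powr (of_real c - 1) * z = z powr of_real c"
      using z by (simp add: powr_def left_diff_distrib exp_diff)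
    ultimately show ?thesis
      by (simp add: linepath_def scaleR_conv_of_real algebra_simps)
  qed
  show ?thesis
    unfolding has_contour_integral_linepath
    by (rule has_integral_spike_interior[OF integral[folded cbox_interval], unfolded box_real])
      (use integrand in simp)
qed

section \<open>A positivity lemma of Jack type\<close>

lemma first_nonpositive_on_circle:
  fixes v :: "complex \<Rightarrow> real"
  assumes cont: "continuous_on (ball 0 1) v" and "v 0 > 0" and z1: "z1 \<in> ball 0 1" "v z1 \<le> 0"
  obtains z0 where "z0 \<in> ball 0 1" "z0 \<noteq> 0" "v z0 = 0"
    "\<And>y. norm y < norm z0 \<Longrightarrow> v y > 0" "\<And>y. norm y = norm z0 \<Longrightarrow> v y \<ge> 0"
proof -
  define S where "S = cball 0 (norm z1) \<inter> v -` {..0}"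
  have "cball 0 (norm z1) \<subseteq> ball 0 1"
    using z1 by auto
  then have "closed S"
    unfolding S_def using continuous_on_subset[OF cont] by (intro continuous_closed_preimage) auto
  then have "compact S"
    by (metis S_def bounded_Int bounded_cball compact_eq_bounded_closed)
  moreover have "z1 \<in> S"
    using z1 by (simp add: S_def)
  ultimately have "\<exists>z0\<in>S. \<forall>y\<in>S. norm z0 \<le> norm y"
    by (intro continuous_attains_inf continuous_on_norm_id) auto
  then obtain z0 where z0: "z0 \<in> S" and min: "\<And>y. y \<in> S \<Longrightarrow> norm z0 \<le> norm y"
    by blast
  have inner: "v y > 0" if "norm y < norm z0" for y
    using min[of y] that z0 by (force simp: S_def)
  have z0_ball: "z0 \<in> ball 0 1" and "v z0 \<le> 0"
    using z0 z1 by (auto simp: S_def)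
  have "z0 \<noteq> 0"
    using \<open>v 0 > 0\<close> \<open>v z0 \<le> 0\<close> by auto
  have circle: "v y \<ge> 0" if "norm y = norm z0" for y
  proof (rule continuous_ge_on_closure[where S = "ball (0::complex) (norm z0)"])
    show "continuous_on (closure (ball 0 (norm z0))) v"
      using z0_ball \<open>z0 \<noteq> 0\<close> by (intro continuous_on_subset[OF cont]) auto
  qed (use that inner \<open>z0 \<noteq> 0\<close> in \<open>auto simp: less_imp_le\<close>)
  have "v z0 = 0"
    using circle[of z0] \<open>v z0 \<le> 0\<close> by simp
  then show thesis
    using that z0_ball \<open>z0 \<noteq> 0\<close> inner circle by blast
qed

lemma has_real_derivative_Re_minus_norm_power2:
  fixes g :: "real \<Rightarrow> complex"
  assumes "(g has_vector_derivative E) (at t)"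
  shows "((\<lambda>t. c * Re (g t) - a * (cmod (g t))\<^sup>2) has_real_derivative
           Re ((of_real c - 2 * of_real a * cnj (g t)) * E)) (at t)"
proof -
  have "((\<lambda>t. g t * cnj (g t)) has_vector_derivative g t * cnj E + E * cnj (g t)) (at t)"
    by (rule has_vector_derivative_mult[OF assms has_vector_derivative_cnj[OF assms]])
  then have "((\<lambda>t. of_real a * (g t * cnj (g t))) has_vector_derivative
      of_real a * (g t * cnj E + E * cnj (g t))) (at t)"
    using has_vector_derivative_mult[OF has_vector_derivative_const] by fastforce
  moreover have "((\<lambda>t. of_real c * g t) has_vector_derivative of_real c * E) (at t)"
    using has_vector_derivative_mult[OF has_vector_derivative_const assms] by simp
  ultimately have "((\<lambda>t. of_real c * g t - of_real a * (g t * cnj (g t))) has_vector_derivative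
          of_real c * E - of_real a * (g t * cnj E + E * cnj (g t))) (at t)"
    by (intro has_vector_derivative_diff)
  then have "((\<lambda>t. Re (of_real c * g t - of_real a * (g t * cnj (g t)))) has_real_derivative
          Re (of_real c * E - of_real a * (g t * cnj E + E * cnj (g t)))) (at t)"
    by (simp add: has_vector_derivative_complex_iff)
  moreover have "(\<lambda>t. Re (of_real c * g t - of_real a * (g t * cnj (g t)))) =
      (\<lambda>t. c * Re (g t) - a * (cmod (g t))\<^sup>2)"
    unfolding cmod_power2 by (simp add: fun_eq_iff power2_eq_square)
  moreover have "Re (of_real c * E - of_real a * (g t * cnj E + E * cnj (g t))) =
           Re ((of_real c - 2 * of_real a * cnj (g t)) * E)"
    by (simp add: algebra_simps)
  ultimately show ?thesis
    by simp
qed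

lemma DERIV_nonpos_if_left_min:
  fixes f :: "real \<Rightarrow> real"
  assumes "(f has_real_derivative D) (at x)" "d > 0" "\<And>h. 0 < h \<Longrightarrow> h < d \<Longrightarrow> f x \<le> f (x - h)"
  shows "D \<le> 0"
proof (rule ccontr)
  assume "\<not> D \<le> 0"
  then obtain e where "e > 0" and e: "\<And>h. 0 < h \<Longrightarrow> h < e \<Longrightarrow> f (x - h) < f x"
    using DERIV_pos_inc_left[OF assms(1)] by force
  then have "f (x - min d e / 2) < f x"
    using \<open>d > 0\<close> by simp
  moreover have "f x \<le> f (x - min d e / 2)"
    using \<open>d > 0\<close> \<open>e > 0\<close> by (intro assms(3)) auto
  ultimately show False
    by simp
qed

lemma jack_boundary_condition:
  fixes W :: "complex \<Rightarrow> complex" and a c :: real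
  defines "v \<equiv> \<lambda>z. c * Re (W z) - a * (cmod (W z))\<^sup>2"
  assumes W: "W holomorphic_on ball 0 1" and z0: "z0 \<in> ball 0 1" "z0 \<noteq> 0" "v z0 = 0"
    and inside: "\<And>y. norm y < norm z0 \<Longrightarrow> v y > 0"
    and circle: "\<And>y. norm y = norm z0 \<Longrightarrow> v y \<ge> 0"
  obtains m where "m \<ge> 0" "(of_real c - 2 * of_real a * cnj (W z0)) * (z0 * deriv W z0) = - of_real m"
proof -
  define X where "X = of_real c - 2 * of_real a * cnj (W z0)"
  define D where "D = z0 * deriv W z0"
  have W': "(W has_field_derivative deriv W z0) (at z0)"
    using W z0 by (meson holomorphic_derivI open_ball)
  have ray: "((\<lambda>w. w * z0) has_field_derivative z0) (at (of_real 1))"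
    by (auto intro!: derivative_eq_intros)
  have "((\<lambda>w. W (w * z0)) has_field_derivative deriv W z0 * z0) (at (of_real 1))"
    using DERIV_chain2[OF _ ray, of W] W' by simp
  from has_real_derivative_Re_minus_norm_power2[OF has_vector_derivative_real_field[OF this], of c a]
  have radial_deriv: "((\<lambda>s. v (of_real s * z0)) has_real_derivative Re (X * D)) (at 1)"
    unfolding v_def X_def D_def by (simp add: mult.commute)
  have left_min: "v (of_real 1 * z0) \<le> v (of_real (1 - h) * z0)" if "0 < h" "h < 1" for h
    using that z0 by (auto intro!: less_imp_le inside simp: norm_mult simp del: of_real_diff)
  have radial: "Re (X * D) \<le> 0"
    using DERIV_nonpos_if_left_min[OF radial_deriv zero_less_one left_min] .
  have rotation: "((\<lambda>w. exp (\<i> * w) * z0) has_field_derivative \<i> * z0) (at (of_real 0))"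
    by (auto intro!: derivative_eq_intros)
  have "((\<lambda>w. W (exp (\<i> * w) * z0)) has_field_derivative deriv W z0 * (\<i> * z0)) (at (of_real 0))"
    using DERIV_chain2[OF _ rotation, of W] W' by simp
  from has_real_derivative_Re_minus_norm_power2[OF has_vector_derivative_real_field[OF this], of c a]
  have tangential: "((\<lambda>s. v (exp (\<i> * of_real s) * z0)) has_real_derivative Re (X * (\<i> * D))) (at 0)"
    unfolding v_def X_def D_def by (simp add: algebra_simps)
  have "v (exp (\<i> * of_real 0) * z0) \<le> v (exp (\<i> * of_real s) * z0)" for s
    using circle z0(3) by (simp add: norm_mult)
  then have "Re (X * (\<i> * D)) = 0"
    by (intro DERIV_local_min[OF tangential, of 1]) auto
  then have "X * D = - of_real (- Re (X * D))"
    by (simp add: complex_eq_iff algebra_simps)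
  with radial show thesis
    using that unfolding X_def D_def by (meson neg_0_le_iff_le)
qed

lemma Re_le_of_circle_eq:
  fixes w :: complex and a c :: real
  assumes "a \<ge> 0" "c > 0" "c * Re w = a * (cmod w)\<^sup>2"
  shows "a * Re w \<le> c"
proof (cases "Re w \<le> 0")
  case False
  have "(Re w)\<^sup>2 \<le> (cmod w)\<^sup>2"
    unfolding cmod_power2 by simp
  then have "a * Re w * Re w \<le> c * Re w"
    using assms mult_left_mono by (fastforce simp: power2_eq_square mult.assoc)
  then show ?thesis
    using False by simp
qed (use assms in \<open>smt (verit) mult_nonneg_nonpos\<close>)

lemma ode_boundary_contradiction:
  fixes w Q :: complex and a b m :: real
  assumes a: "a \<ge> 0" and b: "b > 0" and Q: "Re Q > 0" and m: "m \<ge> 0"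
    and on_boundary: "(a + b) * Re w = a * (cmod w)\<^sup>2"
    and normal: "(of_real (a + b) - 2 * of_real a * cnj w) *
                 (of_real (a + b) * Q - (of_real b + of_real a * Q) * w) = - of_real m"
  shows False
proof -
  define c where "c = a + b"
  define \<mu> where "\<mu> = m / c"
  define u where "u = of_real c - of_real a * w"
  have "c > 0" "\<mu> \<ge> 0"
    using a b m by (auto simp: c_def \<mu>_def)
  have "2 * of_real a * (w * cnj w) = of_real (2 * (a * (cmod w)\<^sup>2))"
    unfolding complex_norm_square[symmetric] by simp
  also have "\<dots> = of_real (2 * (c * Re w))"
    by (simp only: c_def on_boundary)
  also have "\<dots> = of_real c * (w + cnj w)"
    by (simp add: complex_add_cnj)
  finally have tangency: "2 * of_real a * (w * cnj w) - of_real c * (w + cnj w) = 0"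
    by simp
  have "(of_real c - 2 * of_real a * cnj w) * (of_real c * Q - (of_real b + of_real a * Q) * w) =
      of_real c * (Q * cnj u + of_real b * cnj w) +
      (of_real b + of_real a * Q) * (2 * of_real a * (w * cnj w) - of_real c * (w + cnj w))"
    by (simp add: u_def c_def algebra_simps)
  then have "of_real c * (Q * cnj u + of_real b * cnj w) = - of_real m"
    using normal[folded c_def] tangency by simp
  then have key: "Q * cnj u = - of_real \<mu> - of_real b * cnj w"
    using \<open>c > 0\<close> by (simp add: \<mu>_def field_simps)
  have "a * Re w \<le> c"
    using Re_le_of_circle_eq[OF a \<open>c > 0\<close>] on_boundary by (simp add: c_def)
  have "cnj u * u = of_real ((cmod u)\<^sup>2)"
    by (metis complex_norm_square mult.commute)
  then have "(cmod u)\<^sup>2 * Re Q = Re (Q * cnj u * u)"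
    by (simp add: mult.assoc)
  also have "\<dots> = Re ((- of_real \<mu> - of_real b * cnj w) * u)"
    by (simp only: key)
  also have "\<dots> = - \<mu> * (c - a * Re w) - b * (c * Re w - a * (cmod w)\<^sup>2)"
    unfolding u_def cmod_power2 by (simp add: algebra_simps power2_eq_square)
  also have "\<dots> \<le> 0"
    using on_boundary \<open>\<mu> \<ge> 0\<close> \<open>a * Re w \<le> c\<close> by (simp add: c_def)
  finally have "u = 0"
    using Q by (simp add: mult_le_0_iff)
  then have "a \<noteq> 0" "Re w = c / a"
    using \<open>c > 0\<close> by (auto simp: u_def complex_eq_iff field_simps)
  moreover have "\<mu> + b * Re w = 0"
    using arg_cong[OF key, of Re] \<open>u = 0\<close> by simp
  ultimately show False
    using a b \<open>c > 0\<close> \<open>\<mu> \<ge> 0\<close> by (smt (verit) divide_pos_pos mult_pos_pos)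
qed

lemma ode_Re_div_gt:
  fixes W Q :: "complex \<Rightarrow> complex" and a b :: real
  assumes W: "W holomorphic_on ball 0 1" and "W 0 = 1"
    and Q: "\<And>z. z \<in> ball 0 1 \<Longrightarrow> Re (Q z) > 0" and a: "a \<ge> 0" and b: "b > 0"
    and ode: "\<And>z. z \<in> ball 0 1 \<Longrightarrow>
                z * deriv W z = of_real (a + b) * Q z - (of_real b + of_real a * Q z) * W z"
    and z: "z \<in> ball 0 1"
  shows "W z \<noteq> 0" "Re (of_real (a + b) / W z) > a"
proof -
  define v where "v z = (a + b) * Re (W z) - a * (cmod (W z))\<^sup>2" for z
  have "v z > 0"
  proof (rule ccontr)
    assume "\<not> v z > 0"
    moreover have "continuous_on (ball 0 1) v"
      unfolding v_def by (intro continuous_intros holomorphic_on_imp_continuous_on[OF W])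
    moreover have "v 0 > 0"
      using \<open>W 0 = 1\<close> b by (simp add: v_def)
    ultimately obtain z0 where z0: "z0 \<in> ball 0 1" "z0 \<noteq> 0" "v z0 = 0"
      and "\<And>y. norm y < norm z0 \<Longrightarrow> v y > 0" "\<And>y. norm y = norm z0 \<Longrightarrow> v y \<ge> 0"
      using first_nonpositive_on_circle[of v z] z by (metis not_less)
    then obtain m where "m \<ge> 0"
      and "(of_real (a + b) - 2 * of_real a * cnj (W z0)) * (z0 * deriv W z0) = - of_real m"
      using jack_boundary_condition[OF W, of z0 "a + b" a] by (auto simp: v_def)
    moreover have "(a + b) * Re (W z0) = a * (cmod (W z0))\<^sup>2"
      using z0(3) by (simp add: v_def)
    ultimately show False
      using ode_boundary_contradiction[OF a b Q[OF z0(1)]] ode[OF z0(1)] by metis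
  qed
  then show "W z \<noteq> 0"
    using b by (auto simp: v_def)
  then have "Re (of_real (a + b) / W z) = (a + b) * Re (W z) / (cmod (W z))\<^sup>2"
    by (simp add: Re_divide')
  also have "\<dots> > a"
    using \<open>v z > 0\<close> \<open>W z \<noteq> 0\<close> by (simp add: v_def field_simps)
  finally show "Re (of_real (a + b) / W z) > a" .
qed

section \<open>The integral operator\<close>

lemma euler_ode_quotient:
  fixes A \<Phi> Q :: "complex \<Rightarrow> complex" and \<alpha> \<beta> :: real
  assumes "A field_differentiable at z" "\<Phi> field_differentiable at z" "\<Phi> z \<noteq> 0"
    and A_ode: "z * deriv A z + of_real (\<alpha> + \<beta>) * A z = \<Phi> z * Q z"
    and \<Phi>_ode: "z * deriv \<Phi> z = of_real \<alpha> * (Q z - 1) * \<Phi> z"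
  defines "W \<equiv> \<lambda>z. of_real (\<alpha> + \<beta>) * A z / \<Phi> z"
  shows "z * deriv W z = of_real (\<alpha> + \<beta>) * Q z - (of_real \<beta> + of_real \<alpha> * Q z) * W z"
proof -
  define c where "c = complex_of_real (\<alpha> + \<beta>)"
  have "(A has_field_derivative deriv A z) (at z)" "(\<Phi> has_field_derivative deriv \<Phi> z) (at z)"
    using assms(1,2) by (simp_all add: field_differentiable_derivI)
  then have dW: "deriv W z = (c * deriv A z * \<Phi> z - c * A z * deriv \<Phi> z) / (\<Phi> z * \<Phi> z)"
    unfolding W_def c_def using assms(3)
    by (intro DERIV_imp_deriv) (auto intro!: derivative_eq_intros)
  have Wz: "W z = c * A z / \<Phi> z"
    by (simp add: W_def c_def)
  have "z * deriv W z = c * (z * deriv A z) / \<Phi> z - W z * (z * deriv \<Phi> z) / \<Phi> z"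
    unfolding dW Wz using assms(3) by (simp add: field_simps)
  also have "\<dots> = c * (\<Phi> z * Q z - c * A z) / \<Phi> z - W z * (of_real \<alpha> * (Q z - 1))"
  proof -
    have "z * deriv A z = \<Phi> z * Q z - c * A z"
      using A_ode by (simp add: c_def algebra_simps)
    then show ?thesis
      unfolding \<Phi>_ode using assms(3) by simp
  qed
  also have "\<dots> = c * Q z - (of_real \<beta> + of_real \<alpha> * Q z) * W z"
    unfolding Wz using assms(3) by (simp add: c_def field_simps)
  finally show ?thesis
    by (simp add: c_def)
qed

lemma integral_operator:
  fixes \<Phi> Q :: "complex \<Rightarrow> complex" and \<alpha> \<beta> :: real
  assumes Q: "Q holomorphic_on ball 0 1" "Q 0 = 1" "\<And>z. z \<in> ball 0 1 \<Longrightarrow> Re (Q z) > 0"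
    and \<Phi>: "\<Phi> holomorphic_on ball 0 1" "\<Phi> 0 = 1" "\<And>z. z \<in> ball 0 1 \<Longrightarrow> \<Phi> z \<noteq> 0"
    and \<Phi>_ode: "\<And>z. z \<in> ball 0 1 \<Longrightarrow> z * deriv \<Phi> z = of_real \<alpha> * (Q z - 1) * \<Phi> z"
    and \<alpha>: "\<alpha> \<ge> 0" and \<beta>: "\<beta> > 0"
  defines "W \<equiv> \<lambda>z. if z = 0 then 1 else
      of_real (\<alpha> + \<beta>) / (\<Phi> z * z powr of_real (\<alpha> + \<beta>)) *
      contour_integral (linepath 0 z) (\<lambda>t. \<Phi> t * t powr of_real (\<alpha> + \<beta> - 1) * Q t)"
  shows "W holomorphic_on ball 0 1"
    and "\<And>z. z \<in> ball 0 1 \<Longrightarrow>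
           z * deriv W z = of_real (\<alpha> + \<beta>) * Q z - (of_real \<beta> + of_real \<alpha> * Q z) * W z"
    and "\<And>z. z \<in> ball 0 1 \<Longrightarrow> W z \<noteq> 0 \<and> Re (of_real (\<alpha> + \<beta>) / W z) > \<alpha>"
proof -
  define c where "c = \<alpha> + \<beta>"
  have "c > 0"
    using \<alpha> \<beta> by (simp add: c_def)
  obtain A where A: "A holomorphic_on ball 0 1"
    and A_ode: "\<And>z. z \<in> ball 0 1 \<Longrightarrow> z * deriv A z + of_real c * A z = \<Phi> z * Q z"
    using euler_ode_solvable[of "\<lambda>z. \<Phi> z * Q z" c] \<open>c > 0\<close> Q(1) \<Phi>(1)
    by (metis holomorphic_on_mult)
  have W_eq: "W z = of_real c * A z / \<Phi> z" if z: "z \<in> ball 0 1" for z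
  proof (cases "z = 0")
    case True
    then show ?thesis
      using A_ode[of 0] Q(2) \<Phi>(2) by (simp add: W_def)
  next
    case False
    have "((\<lambda>t. t powr (of_real c - 1) * (\<Phi> t * Q t)) has_contour_integral (z powr of_real c * A z))
        (linepath 0 z)"
      using euler_ode_contour_integral[OF A \<open>c > 0\<close> A_ode z False] .
    then have "contour_integral (linepath 0 z) (\<lambda>t. \<Phi> t * t powr of_real (\<alpha> + \<beta> - 1) * Q t) =
        z powr of_real c * A z"
      by (intro contour_integral_unique) (simp add: c_def mult_ac)
    then show ?thesis
      using False \<Phi>(3)[OF z] by (simp add: W_def c_def)
  qed
  show W_hol: "W holomorphic_on ball 0 1"
    by (rule holomorphic_transform[of "\<lambda>z. of_real c * A z / \<Phi> z"])
      (use A \<Phi> W_eq in \<open>auto intro!: holomorphic_intros\<close>)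
  show W_ode: "z * deriv W z = of_real (\<alpha> + \<beta>) * Q z - (of_real \<beta> + of_real \<alpha> * Q z) * W z"
    if z: "z \<in> ball 0 1" for z
  proof -
    have "deriv W z = deriv (\<lambda>z. of_real c * A z / \<Phi> z) z"
      using A \<Phi> W_eq z
      by (intro complex_derivative_transform_within_open[OF W_hol]) (auto intro!: holomorphic_intros)
    moreover have "A field_differentiable at z" "\<Phi> field_differentiable at z"
      using A \<Phi>(1) z by (auto intro: holomorphic_on_imp_differentiable_at)
    ultimately show ?thesis
      using euler_ode_quotient[of A z \<Phi> \<alpha> \<beta> Q] A_ode[OF z] \<Phi>_ode[OF z] \<Phi>(3)[OF z] W_eq[OF z]
      by (simp add: c_def)
  qed
  show "W z \<noteq> 0 \<and> Re (of_real (\<alpha> + \<beta>) / W z) > \<alpha>" if "z \<in> ball 0 1" for z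
    using ode_Re_div_gt[OF W_hol _ Q(3) \<alpha> \<beta> W_ode that] by (simp add: W_def)
qed

lemma vanishes_to_order_ode_solution:
  fixes W Q :: "complex \<Rightarrow> complex" and \<alpha> \<beta> :: real
  assumes W: "W holomorphic_on ball 0 1" and Q: "Q holomorphic_on ball 0 1" and "\<alpha> + \<beta> > 0"
    and ode: "\<And>z. z \<in> ball 0 1 \<Longrightarrow>
                z * deriv W z = of_real (\<alpha> + \<beta>) * Q z - (of_real \<beta> + of_real \<alpha> * Q z) * W z"
    and "vanishes_to_order n (\<lambda>z. Q z - 1)"
  shows "vanishes_to_order n (\<lambda>z. W z - 1)"
proof (rule vanishes_to_order_euler_ode)
  have an: "W analytic_on {0}" "Q analytic_on {0}"
    using W Q by (auto intro!: holomorphic_on_imp_analytic_at)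
  then show "(\<lambda>z. W z - 1) analytic_on {0}"
    by (intro analytic_intros)
  show "complex_of_real (\<alpha> + \<beta>) \<notin> \<int>\<^sub>\<le>\<^sub>0"
    unfolding of_real_in_nonpos_Ints_iff using \<open>\<alpha> + \<beta> > 0\<close> by (auto dest: nonpos_Ints_nonpos)
  have "vanishes_to_order n (\<lambda>z. (Q z - 1) * (of_real (\<alpha> + \<beta>) - of_real \<alpha> * W z))"
    using an assms(5) by (intro vanishes_to_order_mult analytic_intros)
  moreover have "eventually (\<lambda>z. (Q z - 1) * (of_real (\<alpha> + \<beta>) - of_real \<alpha> * W z) =
      z * deriv (\<lambda>z. W z - 1) z + of_real (\<alpha> + \<beta>) * (W z - 1)) (nhds 0)"
    using eventually_nhds_in_open[of "ball 0 1" 0]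
  proof (rule eventually_mono)
    fix z :: complex assume z: "z \<in> ball 0 1"
    have "deriv (\<lambda>z. W z - 1) z = deriv W z"
      using W z by (auto intro!: DERIV_imp_deriv derivative_eq_intros holomorphic_derivI)
    then show "(Q z - 1) * (of_real (\<alpha> + \<beta>) - of_real \<alpha> * W z) =
        z * deriv (\<lambda>z. W z - 1) z + of_real (\<alpha> + \<beta>) * (W z - 1)"
      using ode[OF z] by (simp add: algebra_simps)
  qed simp_all
  ultimately show "vanishes_to_order n (\<lambda>z. z * deriv (\<lambda>z. W z - 1) z + of_real (\<alpha> + \<beta>) * (W z - 1))"
    by (simp add: vanishes_to_order_cong)
qed

section \<open>Zeros and subordination\<close>

lemma nonzero_if_deriv_relation:
  fixes f p R :: "complex \<Rightarrow> complex"
  assumes f: "f holomorphic_on S" and S: "open S" "connected S" and nc: "\<not> f constant_on S"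
    and p: "continuous_on S p" and R: "continuous_on S R"
    and rel: "\<And>z. z \<in> S \<Longrightarrow> f z \<noteq> 0 \<Longrightarrow> p z * deriv f z = R z * f z"
    and z1: "z1 \<in> S" "p z1 \<noteq> 0"
  shows "f z1 \<noteq> 0"
proof
  assume "f z1 = 0"
  then obtain h r k where "0 < k" "0 < r" and sub: "ball z1 r \<subseteq> S"
    and h: "h holomorphic_on ball z1 r"
    and fh: "\<And>w. w \<in> ball z1 r \<Longrightarrow> f w = (w - z1) ^ k * h w"
    and h_nz: "\<And>w. w \<in> ball z1 r \<Longrightarrow> h w \<noteq> 0"
    using holomorphic_factor_zero_nonconstant[OF f S z1(1) _ nc] by metis
  \<comment> \<open>Off the zero, \<open>p f' - R f = (w - z1)^(k-1) L\<close>, but \<open>L z1 = k p z1 h z1 \<noteq> 0\<close>.\<close>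
  define L where "L w = p w * (of_nat k * h w + (w - z1) * deriv h w) - R w * (w - z1) * h w" for w
  have L_zero: "L w = 0" if w: "w \<in> ball z1 r" "w \<noteq> z1" for w
  proof -
    have "((\<lambda>w. (w - z1) ^ k * h w) has_field_derivative
        of_nat k * (w - z1) ^ (k - 1) * h w + (w - z1) ^ k * deriv h w) (at w)"
      using h w by (auto intro!: derivative_eq_intros holomorphic_derivI)
    then have "(f has_field_derivative
        of_nat k * (w - z1) ^ (k - 1) * h w + (w - z1) ^ k * deriv h w) (at w)"
      by (rule has_field_derivative_transform_within_open[where S = "ball z1 r"]) (use w fh in auto)
    moreover have pow: "(w - z1) ^ k = (w - z1) ^ (k - 1) * (w - z1)"
      using \<open>0 < k\<close> by (simp add: power_eq_if[of _ k])
    ultimately have Df: "deriv f w = (w - z1) ^ (k - 1) * (of_nat k * h w + (w - z1) * deriv h w)"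
      by (simp add: DERIV_imp_deriv algebra_simps)
    have ff: "f w = (w - z1) ^ (k - 1) * ((w - z1) * h w)"
      using fh[OF w(1)] pow by simp
    have "(w - z1) ^ (k - 1) * L w = p w * deriv f w - R w * f w"
      unfolding Df ff L_def by (simp add: algebra_simps)
    also have "\<dots> = 0"
      using rel[of w] sub w fh[OF w(1)] h_nz[OF w(1)] by auto
    finally have "(w - z1) ^ (k - 1) * L w = 0" .
    then show ?thesis
      using w(2) by simp
  qed
  have "continuous_on (ball z1 r) L"
    unfolding L_def using sub h
    by (intro continuous_intros holomorphic_on_imp_continuous_on holomorphic_deriv
        continuous_on_subset[OF p] continuous_on_subset[OF R]) auto
  then have "L \<midarrow>z1\<rightarrow> L z1"
    using \<open>0 < r\<close> by (simp add: continuous_on_eq_continuous_at isCont_def)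
  moreover have "eventually (\<lambda>w. L w = 0) (at z1)"
    using \<open>0 < r\<close> L_zero by (auto simp: eventually_at dist_commute intro!: exI[of _ r])
  ultimately have "L z1 = 0"
    by (metis tendsto_eventually tendsto_unique at_neq_bot)
  then show False
    using z1(2) h_nz[of z1] \<open>0 < r\<close> \<open>0 < k\<close> by (simp add: L_def)
qed

lemma subordinate_half_plane:
  assumes "subordinate Q (\<lambda>z. (1 + z) / (1 - z))"
  shows "Q holomorphic_on ball 0 1" and "\<And>z. z \<in> ball 0 1 \<Longrightarrow> Re (Q z) > 0"
proof -
  obtain w where w: "w holomorphic_on ball 0 1" "w ` ball 0 1 \<subseteq> ball 0 1"
    and Q: "\<And>z. z \<in> ball 0 1 \<Longrightarrow> Q z = (1 + w z) / (1 - w z)"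
    using assms unfolding subordinate_def by auto
  have w1: "1 - w z \<noteq> 0" if "z \<in> ball 0 1" for z
    using w(2) that by (metis image_subset_iff mem_ball_0 norm_one order_less_irrefl right_minus_eq)
  show "Q holomorphic_on ball 0 1"
    by (rule holomorphic_transform[of "\<lambda>z. (1 + w z) / (1 - w z)"])
      (use w w1 Q in \<open>auto intro!: holomorphic_intros\<close>)
  show "Re (Q z) > 0" if "z \<in> ball 0 1" for z
  proof -
    define u where "u = w z"
    have "norm u < 1"
      using w(2) that unfolding u_def by (metis image_subset_iff mem_ball_0)
    then have "(Re u)\<^sup>2 + (Im u)\<^sup>2 < 1"
      by (simp flip: cmod_power2 add: power_less_one_iff)
    moreover have "(Re (1 - u))\<^sup>2 + (Im (1 - u))\<^sup>2 > 0"
      using w1[OF that] unfolding u_def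
      by (metis complex_eq_iff sum_power2_gt_zero_iff zero_complex.sel(1) zero_complex.sel(2))
    moreover have "Re ((1 + u) / (1 - u)) =
        ((1 + Re u) * (1 - Re u) - Im u * Im u) / ((Re (1 - u))\<^sup>2 + (Im (1 - u))\<^sup>2)"
      unfolding Re_divide by simp
    ultimately have "Re ((1 + u) / (1 - u)) > 0"
      by (simp add: algebra_simps power2_eq_square)
    then show ?thesis
      using Q[OF that] by (simp add: u_def)
  qed
qed

locale integral_operator_setting =
  fixes n :: nat and \<phi>1 \<phi>2 g :: "complex \<Rightarrow> complex"
    and lam \<eta> \<gamma> \<delta> :: complex and \<alpha> \<beta> :: real
    and Q K F :: "complex \<Rightarrow> complex"
  assumes phi1: "H1 n \<phi>1" and phi2: "H1 n \<phi>2"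
    and nz: "\<forall>z\<in>ball 0 1. \<phi>1 z * \<phi>2 z \<noteq> 0"
    and eta: "\<eta> \<noteq> 0" and ld: "lam + \<delta> = 1" and eg: "\<eta> + \<gamma> = 1"
    and alpha: "\<alpha> \<ge> 0" and beta: "\<beta> \<ge> 0" "\<beta> \<noteq> 0"
    and g: "An n g"
    and Q_def: "Q = (\<lambda>z. lam * zlogdA g z + zlogd \<phi>1 z + \<delta>)"
    and sub: "subordinate Q (\<lambda>z. (1 + z) / (1 - z))"
    and K_def: "K = (\<lambda>z. if z = 0 then 1 else
         of_real (\<alpha> + \<beta>) /
           (npow \<phi>2 (of_real \<beta>) z * npow (\<lambda>t. if t = 0 then 1 else g t / t) (lam * of_real \<alpha>) z
            * npow \<phi>1 (of_real \<alpha>) z * z powr (of_real (\<alpha> + \<beta>)))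
         * contour_integral (linepath 0 z)
             (\<lambda>t. npow (\<lambda>t. if t = 0 then 1 else g t / t) (lam * of_real \<alpha>) t
                  * npow \<phi>1 (of_real \<alpha>) t * t powr (of_real (\<alpha> + \<beta> - 1)) * Q t))"
    and F_def: "F = (\<lambda>z. z * npow K (1 / (\<eta> * of_real \<beta>)) z)"
begin

lemma beta_pos: "\<beta> > 0"
  using beta by simp

definition G :: "complex \<Rightarrow> complex" where
  "G = (\<lambda>t. if t = 0 then 1 else g t / t)"

lemma \<phi>1: "\<phi>1 holomorphic_on ball 0 1" "\<forall>z\<in>ball 0 1. \<phi>1 z \<noteq> 0" "\<phi>1 0 = 1"
  and \<phi>2: "\<phi>2 holomorphic_on ball 0 1" "\<forall>z\<in>ball 0 1. \<phi>2 z \<noteq> 0" "\<phi>2 0 = 1"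
  using phi1 phi2 nz by (simp_all add: H1_def)

lemma g_holomorphic: "g holomorphic_on ball 0 1"
  and g_0: "g 0 = 0" and deriv_g_0: "deriv g 0 = 1"
  using g by (simp_all add: An_def)

lemma g_eq: "g z = z * G z"
  using g_0 by (auto simp: G_def)

lemma g_fun: "(\<lambda>z. z * G z) = g"
  by (simp add: fun_eq_iff g_eq)

lemma G_holomorphic: "G holomorphic_on ball 0 1"
proof -
  have "(\<lambda>z. if z = 0 then deriv g 0 else (g z - g 0) / (z - 0)) holomorphic_on ball 0 1"
    using g_holomorphic by (intro pole_lemma) auto
  moreover have "(\<lambda>z. if z = 0 then deriv g 0 else (g z - g 0) / (z - 0)) = G"
    using g_0 deriv_g_0 by (auto simp: G_def)
  ultimately show ?thesis
    by simp
qed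

lemma G_0 [simp]: "G 0 = 1"
  by (simp add: G_def)

lemma G_vanishes: "vanishes_to_order n (\<lambda>z. G z - 1)"
  using g An_times_z_iff[OF G_holomorphic] by (simp only: g_fun)

lemma Q_holomorphic: "Q holomorphic_on ball 0 1"
  and Re_Q: "\<And>z. z \<in> ball 0 1 \<Longrightarrow> Re (Q z) > 0"
  using subordinate_half_plane[OF sub] by auto

lemma Q_0: "Q 0 = 1"
  using ld by (simp add: Q_def zlogdA_def zlogd_def)

lemma G_nonzero:
  assumes "lam \<noteq> 0" "z \<in> ball 0 1"
  shows "G z \<noteq> 0"
proof (cases "z = 0")
  case False
  have nc: "\<not> g constant_on ball 0 1"
  proof
    assume "g constant_on ball 0 1"
    then have "deriv g 0 = deriv (\<lambda>_. g 0) 0"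
      by (intro complex_derivative_transform_within_open[OF g_holomorphic])
        (auto simp: constant_on_def)
    then show False
      using deriv_g_0 by simp
  qed
  have "(\<lambda>z. Q z - z * deriv \<phi>1 z / \<phi>1 z - \<delta>) holomorphic_on ball 0 1"
    using \<phi>1 by (intro holomorphic_intros Q_holomorphic holomorphic_deriv) auto
  then have R: "continuous_on (ball 0 1) (\<lambda>z. Q z - z * deriv \<phi>1 z / \<phi>1 z - \<delta>)"
    by (rule holomorphic_on_imp_continuous_on)
  have rel: "lam * z * deriv g z = (Q z - z * deriv \<phi>1 z / \<phi>1 z - \<delta>) * g z" if "g z \<noteq> 0" for z
    using that g_0 by (cases "z = 0") (auto simp: Q_def zlogdA_def zlogd_def)
  have "g z \<noteq> 0"
    by (rule nonzero_if_deriv_relation[OF g_holomorphic open_ball connected_ball nc _ R rel])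
      (use assms False in \<open>auto intro: continuous_intros\<close>)
  then show ?thesis
    using False by (simp add: G_def)
qed simp

lemma deriv_g:
  assumes "z \<in> ball 0 1"
  shows "deriv g z = G z + z * deriv G z"
proof -
  have "((\<lambda>w. w * G w) has_field_derivative G z + z * deriv G z) (at z)"
    using assms by (auto intro!: derivative_eq_intros holomorphic_derivI[OF G_holomorphic])
  then show ?thesis
    unfolding g_fun by (rule DERIV_imp_deriv)
qed

lemma Q_minus_1:
  assumes z: "z \<in> ball 0 1"
  shows "Q z - 1 = lam * (z * deriv G z / G z) + z * deriv \<phi>1 z / \<phi>1 z"
proof (cases "z = 0 \<or> lam = 0")
  case True
  then show ?thesis
    using ld by (auto simp: Q_def zlogd_def zlogdA_def algebra_simps)
next
  case False
  then have "zlogdA g z = 1 + z * deriv G z / G z"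
    using G_nonzero[OF _ z] by (simp add: zlogdA_def deriv_g[OF z] g_eq field_simps)
  then show ?thesis
    using ld by (simp add: Q_def zlogd_def algebra_simps)
qed

definition \<Phi> :: "complex \<Rightarrow> complex" where
  "\<Phi> = (\<lambda>z. npow G (lam * of_real \<alpha>) z * npow \<phi>1 (of_real \<alpha>) z)"

lemma npow_G_holomorphic: "npow G (lam * of_real \<alpha>) holomorphic_on ball 0 1"
  using G_nonzero by (cases "lam = 0") (auto intro!: npow_holomorphic[OF G_holomorphic _ G_0])

lemma npow_G_0: "npow G (lam * of_real \<alpha>) 0 = 1"
  using G_nonzero by (cases "lam = 0") (auto intro!: npow_at_0[OF G_holomorphic _ G_0])

lemma z_deriv_npow_G:
  assumes "z \<in> ball 0 1"
  shows "z * deriv (npow G (lam * of_real \<alpha>)) z =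
           of_real \<alpha> * (lam * (z * deriv G z / G z)) * npow G (lam * of_real \<alpha>) z"
  using G_nonzero assms by (cases "lam = 0") (simp_all add: deriv_npow[OF G_holomorphic _ G_0] mult_ac)

lemma \<Phi>_holomorphic: "\<Phi> holomorphic_on ball 0 1"
  unfolding \<Phi>_def using npow_G_holomorphic npow_holomorphic[OF \<phi>1]
  by (intro holomorphic_intros)

lemma \<Phi>_0: "\<Phi> 0 = 1"
  using npow_G_0 npow_at_0[OF \<phi>1] by (simp add: \<Phi>_def)

lemma \<Phi>_nonzero: "\<Phi> z \<noteq> 0"
  by (simp add: \<Phi>_def)

lemma \<Phi>_ode:
  assumes z: "z \<in> ball 0 1"
  shows "z * deriv \<Phi> z = of_real \<alpha> * (Q z - 1) * \<Phi> z"
proof -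
  let ?P0 = "npow G (lam * of_real \<alpha>)" and ?P1 = "npow \<phi>1 (of_real \<alpha>)"
  note holomorphic_derivI[OF npow_G_holomorphic open_ball z]
    holomorphic_derivI[OF npow_holomorphic[OF \<phi>1] open_ball z]
  then have "deriv \<Phi> z = deriv ?P0 z * ?P1 z + ?P0 z * deriv ?P1 z"
    unfolding \<Phi>_def by (intro DERIV_imp_deriv) (auto intro!: derivative_eq_intros)
  then have "z * deriv \<Phi> z = (z * deriv ?P0 z) * ?P1 z + ?P0 z * (z * deriv ?P1 z)"
    by (simp add: algebra_simps)
  also have "\<dots> = of_real \<alpha> * (lam * (z * deriv G z / G z) + z * deriv \<phi>1 z / \<phi>1 z) * \<Phi> z"
    unfolding z_deriv_npow_G[OF z] deriv_npow[OF \<phi>1 z] by (simp add: \<Phi>_def algebra_simps)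
  finally show ?thesis
    using Q_minus_1[OF z] by simp
qed

definition W :: "complex \<Rightarrow> complex" where
  "W z = (if z = 0 then 1 else
      of_real (\<alpha> + \<beta>) / (\<Phi> z * z powr of_real (\<alpha> + \<beta>)) *
      contour_integral (linepath 0 z) (\<lambda>t. \<Phi> t * t powr of_real (\<alpha> + \<beta> - 1) * Q t))"

lemma W_holomorphic: "W holomorphic_on ball 0 1"
  and W_ode: "\<And>z. z \<in> ball 0 1 \<Longrightarrow>
                z * deriv W z = of_real (\<alpha> + \<beta>) * Q z - (of_real \<beta> + of_real \<alpha> * Q z) * W z"
  and W_bound: "\<And>z. z \<in> ball 0 1 \<Longrightarrow> W z \<noteq> 0 \<and> Re (of_real (\<alpha> + \<beta>) / W z) > \<alpha>"
  unfolding W_def[abs_def]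
  using integral_operator[OF Q_holomorphic Q_0 Re_Q \<Phi>_holomorphic \<Phi>_0 _ \<Phi>_ode alpha beta_pos]
    \<Phi>_nonzero by blast+

lemma W_0: "W 0 = 1"
  by (simp add: W_def)

lemma K_eq:
  assumes "z \<in> ball 0 1"
  shows "K z = W z / npow \<phi>2 (of_real \<beta>) z"
proof (cases "z = 0")
  case True
  then show ?thesis
    by (simp add: K_def W_0 npow_at_0[OF \<phi>2])
next
  case False
  then show ?thesis
    by (simp add: K_def W_def \<Phi>_def G_def[symmetric] field_simps)
qed

lemma K_holomorphic: "K holomorphic_on ball 0 1"
  by (rule holomorphic_transform[of "\<lambda>z. W z / npow \<phi>2 (of_real \<beta>) z"])
    (auto intro!: holomorphic_intros W_holomorphic npow_holomorphic[OF \<phi>2] simp: K_eq)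

lemma K_nonzero: "\<forall>z\<in>ball 0 1. K z \<noteq> 0"
  using W_bound by (simp add: K_eq)

lemma K_0: "K 0 = 1"
  by (simp add: K_def)

lemma K_logderiv:
  assumes z: "z \<in> ball 0 1"
  shows "z * deriv K z / K z = z * deriv W z / W z - of_real \<beta> * (z * deriv \<phi>2 z / \<phi>2 z)"
proof -
  let ?P = "npow \<phi>2 (of_real \<beta>)"
  have "deriv K z = deriv (\<lambda>z. W z / ?P z) z"
    using z K_eq by (intro complex_derivative_transform_within_open[OF K_holomorphic _ open_ball])
      (auto intro!: holomorphic_intros W_holomorphic npow_holomorphic[OF \<phi>2])
  also have "\<dots> = (deriv W z * ?P z - W z * deriv ?P z) / (?P z * ?P z)"
    using holomorphic_derivI[OF W_holomorphic open_ball z]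
      holomorphic_derivI[OF npow_holomorphic[OF \<phi>2] open_ball z]
    by (intro DERIV_imp_deriv) (auto intro!: derivative_eq_intros)
  finally have "deriv K z / K z = deriv W z / W z - deriv ?P z / ?P z"
    using W_bound[OF z] by (simp add: K_eq[OF z] field_simps)
  also have "deriv ?P z / ?P z = of_real \<beta> * (deriv \<phi>2 z / \<phi>2 z)"
    by (simp add: deriv_npow[OF \<phi>2 z])
  finally have "z * (deriv K z / K z) = z * (deriv W z / W z - of_real \<beta> * (deriv \<phi>2 z / \<phi>2 z))"
    by simp
  then show ?thesis
    by (simp add: algebra_simps)
qed

lemma zlogdA_F:
  assumes z: "z \<in> ball 0 1" "z \<noteq> 0"
  shows "zlogdA F z = 1 + 1 / (\<eta> * of_real \<beta>) * (z * deriv K z / K z)"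
proof -
  let ?E = "npow K (1 / (\<eta> * of_real \<beta>))"
  have E_hol: "?E holomorphic_on ball 0 1"
    by (rule npow_holomorphic[OF K_holomorphic K_nonzero K_0])
  have "deriv F z = ?E z + z * deriv ?E z"
    unfolding F_def using holomorphic_derivI[OF E_hol open_ball z(1)]
    by (intro DERIV_imp_deriv) (auto intro!: derivative_eq_intros)
  then show ?thesis
    using z by (simp add: zlogdA_def F_def deriv_npow[OF K_holomorphic K_nonzero K_0] field_simps)
qed

lemma ratio_eq:
  assumes z: "z \<in> ball 0 1"
  shows "(\<eta> * zlogdA F z + zlogd \<phi>2 z + \<gamma>) / (lam * zlogdA g z + zlogd \<phi>1 z + \<delta>) =
         (of_real (\<alpha> + \<beta>) / W z - of_real \<alpha>) / of_real \<beta>"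
proof (cases "z = 0")
  case True
  then show ?thesis
    using ld eg beta by (simp add: zlogdA_def zlogd_def W_0)
next
  case False
  have "\<eta> * zlogdA F z + zlogd \<phi>2 z + \<gamma> =
      (\<eta> + \<gamma>) + \<eta> * (1 / (\<eta> * of_real \<beta>)) * (z * deriv K z / K z) + z * deriv \<phi>2 z / \<phi>2 z"
    by (simp add: zlogdA_F[OF z False] zlogd_def algebra_simps)
  also have "\<dots> = 1 + (z * deriv K z / K z) / of_real \<beta> + z * deriv \<phi>2 z / \<phi>2 z"
    using eg eta by simp
  also have "\<dots> = 1 + z * deriv W z / (of_real \<beta> * W z)"
    using beta by (simp add: K_logderiv[OF z] field_simps)
  also have "\<dots> = Q z * ((of_real (\<alpha> + \<beta>) / W z - of_real \<alpha>) / of_real \<beta>)"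
    using beta W_bound[OF z] by (simp add: W_ode[OF z] field_simps)
  finally have "\<eta> * zlogdA F z + zlogd \<phi>2 z + \<gamma> =
      Q z * ((of_real (\<alpha> + \<beta>) / W z - of_real \<alpha>) / of_real \<beta>)" .
  moreover have "lam * zlogdA g z + zlogd \<phi>1 z + \<delta> = Q z"
    by (simp add: Q_def)
  moreover have "Q z \<noteq> 0"
    using Re_Q[OF z] by auto
  ultimately show ?thesis
    by simp
qed

lemma Re_ratio_pos:
  assumes "z \<in> ball 0 1"
  shows "Re ((\<eta> * zlogdA F z + zlogd \<phi>2 z + \<gamma>) / (lam * zlogdA g z + zlogd \<phi>1 z + \<delta>)) > 0"
  using W_bound[OF assms] beta_pos
  by (simp add: ratio_eq[OF assms] Re_divide_of_real del: of_real_add)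

lemma Q_vanishes: "vanishes_to_order n (\<lambda>z. Q z - 1)"
proof -
  have an: "\<phi>1 analytic_on {0}" "G analytic_on {0}"
    using \<phi>1(1) G_holomorphic by (auto intro!: holomorphic_on_imp_analytic_at)
  have "vanishes_to_order n (\<lambda>z. z * deriv \<phi>1 z / \<phi>1 z)"
    using an H1_vanishes_to_order[OF phi1] \<phi>1(3) by (intro vanishes_to_order_z_logderiv) auto
  moreover have "vanishes_to_order n (\<lambda>z. lam * (z * deriv G z / G z))"
  proof (cases "lam = 0")
    case False
    have "vanishes_to_order n (\<lambda>z. z * deriv G z / G z * lam)"
      using an G_vanishes
      by (intro vanishes_to_order_mult[of "\<lambda>z. z * deriv G z / G z"] vanishes_to_order_z_logderiv
          analytic_intros) auto
    then show ?thesis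
      by (simp add: mult.commute)
  qed (simp add: vanishes_to_order_def)
  ultimately have "vanishes_to_order n (\<lambda>z. lam * (z * deriv G z / G z) + z * deriv \<phi>1 z / \<phi>1 z)"
    using an \<phi>1(3)
    by (intro vanishes_to_order_add[of "\<lambda>z. lam * (z * deriv G z / G z)"] analytic_intros) auto
  moreover have "eventually (\<lambda>z. lam * (z * deriv G z / G z) + z * deriv \<phi>1 z / \<phi>1 z = Q z - 1) (nhds 0)"
    using eventually_nhds_in_open[of "ball 0 1" 0] by (rule eventually_mono) (auto simp: Q_minus_1)
  ultimately show ?thesis
    by (simp add: vanishes_to_order_cong)
qed

lemma K_vanishes: "vanishes_to_order n (\<lambda>z. K z - 1)"
proof -
  let ?P = "npow \<phi>2 (of_real \<beta>)"
  have an: "W analytic_on {0}" "?P analytic_on {0}"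
    using W_holomorphic npow_holomorphic[OF \<phi>2] by (auto intro!: holomorphic_on_imp_analytic_at)
  have "vanishes_to_order n (\<lambda>z. W z - 1)"
    using alpha beta_pos
    by (intro vanishes_to_order_ode_solution[OF W_holomorphic Q_holomorphic _ W_ode Q_vanishes]) auto
  moreover have "vanishes_to_order n (\<lambda>z. ?P z - 1)"
    by (rule vanishes_to_order_npow[OF \<phi>2 H1_vanishes_to_order[OF phi2]])
  ultimately have "vanishes_to_order n (\<lambda>z. ((W z - 1) - (?P z - 1)) * (1 / ?P z))"
    using an by (intro vanishes_to_order_mult[of "\<lambda>z. (W z - 1) - (?P z - 1)"]
        vanishes_to_order_diff[of "\<lambda>z. W z - 1" "\<lambda>z. ?P z - 1"] analytic_intros) auto
  moreover have "eventually (\<lambda>z. ((W z - 1) - (?P z - 1)) * (1 / ?P z) = K z - 1) (nhds 0)"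
    using eventually_nhds_in_open[of "ball 0 1" 0]
    by (rule eventually_mono) (auto simp: K_eq field_simps)
  ultimately show ?thesis
    by (simp add: vanishes_to_order_cong)
qed

lemma F_div_z_nonzero: "z \<noteq> 0 \<Longrightarrow> F z / z \<noteq> 0"
  by (simp add: F_def)

lemma An_F: "An n F"
  unfolding F_def
  using vanishes_to_order_npow[OF K_holomorphic K_nonzero K_0 K_vanishes]
    npow_holomorphic[OF K_holomorphic K_nonzero K_0] npow_at_0[OF K_holomorphic K_nonzero K_0]
  by (simp add: An_times_z_iff)

end

theorem mainTheorem5:
  fixes n :: nat and \<phi>1 \<phi>2 g :: "complex \<Rightarrow> complex"
    and lam \<eta> \<gamma> \<delta> :: complex and \<alpha> \<beta> :: real
    and Q K F :: "complex \<Rightarrow> complex"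
  assumes n: "n \<ge> 1"
    and phi1: "H1 n \<phi>1" and phi2: "H1 n \<phi>2"
    and nz: "\<forall>z\<in>ball 0 1. \<phi>1 z * \<phi>2 z \<noteq> 0"
    and eta: "\<eta> \<noteq> 0" and ld: "lam + \<delta> = 1" and eg: "\<eta> + \<gamma> = 1"
    and alpha: "\<alpha> \<ge> 0" and beta: "\<beta> \<ge> 0" "\<beta> \<noteq> 0"
    and g: "An n g"
    and Q_def: "Q = (\<lambda>z. lam * zlogdA g z + zlogd \<phi>1 z + \<delta>)"
    and sub: "subordinate Q (\<lambda>z. (1 + z) / (1 - z))"
    and K_def: "K = (\<lambda>z. if z = 0 then 1 else
         of_real (\<alpha> + \<beta>) /
           (npow \<phi>2 (of_real \<beta>) z * npow (\<lambda>t. if t = 0 then 1 else g t / t) (lam * of_real \<alpha>) z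
            * npow \<phi>1 (of_real \<alpha>) z * z powr (of_real (\<alpha> + \<beta>)))
         * contour_integral (linepath 0 z)
             (\<lambda>t. npow (\<lambda>t. if t = 0 then 1 else g t / t) (lam * of_real \<alpha>) t
                  * npow \<phi>1 (of_real \<alpha>) t * t powr (of_real (\<alpha> + \<beta> - 1)) * Q t))"
    and F_def: "F = (\<lambda>z. z * npow K (1 / (\<eta> * of_real \<beta>)) z)"
  shows "(\<forall>z\<in>ball 0 1. K z \<noteq> 0) \<and> An n F \<and> (\<forall>z\<in>ball 0 1 - {0}. F z / z \<noteq> 0) \<and>
         (\<forall>z\<in>ball 0 1. Re ((\<eta> * zlogdA F z + zlogd \<phi>2 z + \<gamma>) /
                                 (lam * zlogdA g z + zlogd \<phi>1 z + \<delta>)) > 0)"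
proof -
  interpret integral_operator_setting n \<phi>1 \<phi>2 g lam \<eta> \<gamma> \<delta> \<alpha> \<beta> Q K F
    by unfold_locales (fact assms)+
  show ?thesis
    using K_nonzero An_F F_div_z_nonzero Re_ratio_pos by blast
qed

end
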